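(* Let $F$ be a distribution on $[0,\infty)$ with a long-tailed density $f$ on $[\widehat x,\infty)$. Suppose one of the following holds: (i) there exists $c>0$ such that $f(y)\ge cf(x)$ for all $y\in(x,2x]$ and all sufficiently large $x$; (ii) $g(x)=-\ln f(x)$ is concave for $x\ge x_0$ for some $x_0$, and for some function $h(x)\to\infty$ one has $f(x+t)\sim f(x)$ as $x\to\infty$ uniformly in $|t|\le h(x)$ and $x\,e^{-g(h(x))}\to0$ as $x\to\infty$. Then $f$ is subexponential, i.e. $F\in\mathcal S_{ac}$.
   Context: A distribution $F$ has a density $f$ on $[\widehat x,\infty)$ if $F(B)=\int_Bf(y)dy$ for Borel $B\subseteq[\widehat x,\infty)$. Such a density is long-tailed if it is bounded on $[\widehat x,\infty)$, $f(x)>0$ for all large $x$, and $f(x+t)\sim f(x)$ as $x\to\infty$ uniformly in $t\in[0,1]$. $F\in\mathcal S_{ac}$ if $f$ is long-tailed and $2\int_0^{\widehat x}f(x-y)F(dy)+\int_{\widehat x}^{x-\widehat x}f(x-y)f(y)dy\sim2f(x)$ as $x\to\infty$. *)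

theory Defs
  imports "HOL-Analysis.Analysis" "HOL-Probability.Probability" "HOL-Library.Landau_Symbols"
begin

definition distribution_on_nonneg :: "real measure \<Rightarrow> bool" where
  "distribution_on_nonneg F \<longleftrightarrow>
     prob_space F \<and> sets F = sets borel \<and> emeasure F {..<0} = 0"

definition has_density_on :: "real measure \<Rightarrow> (real \<Rightarrow> real) \<Rightarrow> real \<Rightarrow> bool" where
  "has_density_on F f xh \<longleftrightarrow>
     f \<in> borel_measurable (restrict_space borel {xh..}) \<and>
     (\<forall>y\<ge>xh. 0 \<le> f y) \<and>
     (\<forall>B\<in>sets borel. B \<subseteq> {xh..} \<longrightarrow>
        emeasure F B = (\<integral>\<^sup>+ y\<in>B. ennreal (f y) \<partial>lborel))"

definition long_tailed_density :: "(real \<Rightarrow> real) \<Rightarrow> real \<Rightarrow> bool" where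
  "long_tailed_density f xh \<longleftrightarrow>
     (\<exists>M. \<forall>x\<ge>xh. \<bar>f x\<bar> \<le> M) \<and>
     (\<forall>\<^sub>F x in at_top. f x > 0) \<and>
     (\<forall>\<epsilon>>0. \<forall>\<^sub>F x in at_top. \<forall>t\<in>{0..1}. \<bar>f (x + t) / f x - 1\<bar> \<le> \<epsilon>)"

definition S_ac :: "real measure \<Rightarrow> (real \<Rightarrow> real) \<Rightarrow> real \<Rightarrow> bool" where
  "S_ac F f xh \<longleftrightarrow>
     long_tailed_density f xh \<and>
     (\<lambda>x. 2 * (\<integral>y\<in>{0..xh}. f (x - y) \<partial>F)
            + (\<integral>y\<in>{xh..x - xh}. f (x - y) * f y \<partial>lborel))
       \<sim>[at_top] (\<lambda>x. 2 * f x)"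

end

theory Submission
  imports Defs
begin

text \<open>
  Split the convolution integral at x/2: by symmetry it is twice the integral over
  xh \<le> y \<le> x/2. For fixed a, long-tailedness gives f(x - y) \<sim> f(x) uniformly in y \<le> a,
  so the part y \<le> a contributes about f(x) F(xh, a], and likewise the first term contributes
  about 2 f(x) F[0, xh]. What remains is to show that the range a < y \<le> x/2 contributes at
  most f(x) times a quantity that is small for large a. Under (i), x \<in> (x - y, 2(x - y)], so
  f(x - y) \<le> f(x)/c and this range costs at most f(x) F(a, \<infinity>)/c. Under (ii), f is
  log-convex, so on h(x) < y \<le> x/2 the product f(x - y) f(y) is at most
  f(h(x)) f(x - h(x)) \<sim> f(h(x)) f(x), and the whole range costs at most x f(h(x)) f(x) = o(f(x));
  the range y \<le> h(x) is covered by the uniform insensitivity of f on |t| \<le> h(x).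
  Since F[0, xh] + F(xh, \<infinity>) = 1, the two terms together are asymptotic to 2 f(x).
\<close>

lemma tendsto_real_by_le:
  fixes g :: "'a \<Rightarrow> real"
  assumes "\<And>\<epsilon>. \<epsilon> > 0 \<Longrightarrow> \<forall>\<^sub>F x in F. \<bar>g x - L\<bar> \<le> \<epsilon>"
  shows "(g \<longlongrightarrow> L) F"
proof (rule tendstoI)
  fix e :: real
  assume "e > 0"
  with assms[of "e/2"] show "\<forall>\<^sub>F x in F. dist (g x) L < e"
    by (auto elim!: eventually_mono simp: dist_real_def)
qed

lemma bounds_of_ratio_near_one:
  fixes a b d :: real
  assumes "a > 0" and "\<bar>b / a - 1\<bar> \<le> d"
  shows "(1 - d) * a \<le> b \<and> b \<le> (1 + d) * a"
proof -
  have "1 - d \<le> b / a" "b / a \<le> 1 + d"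
    using assms(2) by auto
  with assms(1) show ?thesis
    by (auto simp: field_simps)
qed

lemma multiplicative_bounds_mono:
  fixes a b d e :: real
  assumes "0 \<le> a" "e \<le> d" "(1 - e) * a \<le> b \<and> b \<le> (1 + e) * a"
  shows "(1 - d) * a \<le> b \<and> b \<le> (1 + d) * a"
proof -
  have "e * a \<le> d * a"
    by (rule mult_right_mono[OF assms(2,1)])
  then show ?thesis
    using assms(3) by (simp add: algebra_simps)
qed

lemma multiplicative_bounds_trans:
  fixes a b c d e :: real
  assumes "a > 0" "0 \<le> e" "e \<le> 1" "3 * e \<le> d"
    and "(1 - e) * a \<le> b \<and> b \<le> (1 + e) * a" "(1 - e) * b \<le> c \<and> c \<le> (1 + e) * b"
  shows "(1 - d) * a \<le> c \<and> c \<le> (1 + d) * a"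
proof (rule multiplicative_bounds_mono[OF less_imp_le[OF assms(1)] assms(4)], rule conjI)
  have "(1 - 3 * e) * a \<le> (1 - e) * ((1 - e) * a)"
    using assms(1-3) by (simp add: algebra_simps)
  also have "\<dots> \<le> c"
    using assms(3,5,6) by (smt (verit) mult_left_mono)
  finally show "(1 - 3 * e) * a \<le> c" .
  have "c \<le> (1 + e) * ((1 + e) * a)"
    using assms(2,5,6) by (smt (verit) mult_left_mono)
  also have "\<dots> \<le> (1 + 3 * e) * a"
  proof -
    have "e * e \<le> e"
      using assms(2,3) by (simp add: mult_left_le)
    then show ?thesis
      using assms(1) by (simp add: algebra_simps)
  qed
  finally show "c \<le> (1 + 3 * e) * a" .
qed

subsection \<open>Densities\<close>

lemma long_tailed_density_bounds:
  assumes "long_tailed_density f xh" and "d > 0"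
  shows "\<forall>\<^sub>F x in at_top. f x > 0 \<and>
           (\<forall>t\<in>{0..1}. (1 - d) * f x \<le> f (x + t) \<and> f (x + t) \<le> (1 + d) * f x)"
proof -
  have "\<forall>\<^sub>F x in at_top. f x > 0"
    and "\<forall>\<^sub>F x in at_top. \<forall>t\<in>{0..1}. \<bar>f (x + t) / f x - 1\<bar> \<le> d"
    using assms unfolding long_tailed_density_def by auto
  then show ?thesis
    by eventually_elim (metis bounds_of_ratio_near_one)
qed

lemma long_tailed_density_bounds_nat:
  assumes "long_tailed_density f xh" and "d > 0"
  shows "\<forall>\<^sub>F x in at_top. f x > 0 \<and>
           (\<forall>t\<in>{0..real n}. (1 - d) * f x \<le> f (x + t) \<and> f (x + t) \<le> (1 + d) * f x)"
  using assms(2)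
proof (induction n arbitrary: d)
  case 0
  from long_tailed_density_bounds[OF assms(1) 0] show ?case
    by eventually_elim (use 0 in \<open>auto simp: algebra_simps\<close>)
next
  case (Suc n)
  define e where "e = min 1 (d / 3)"
  have e: "0 < e" "e \<le> 1" "3 * e \<le> d"
    using Suc.prems by (auto simp: e_def)
  obtain N1 where N1: "\<And>x. x \<ge> N1 \<Longrightarrow> f x > 0 \<and>
      (\<forall>t\<in>{0..real n}. (1 - e) * f x \<le> f (x + t) \<and> f (x + t) \<le> (1 + e) * f x)"
    using Suc.IH[OF e(1)] by (auto simp: eventually_at_top_linorder)
  obtain N2 where N2: "\<And>x. x \<ge> N2 \<Longrightarrow>
      (\<forall>t\<in>{0..1}. (1 - e) * f x \<le> f (x + t) \<and> f (x + t) \<le> (1 + e) * f x)"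
    using long_tailed_density_bounds[OF assms(1) e(1)] by (auto simp: eventually_at_top_linorder)
  show ?case
    unfolding eventually_at_top_linorder
  proof (intro exI[of _ "max N1 N2"] allI impI conjI ballI)
    fix x
    assume x: "x \<ge> max N1 N2"
    then show fx: "f x > 0"
      using N1[of x] by auto
    fix t
    assume t: "t \<in> {0..real (Suc n)}"
    have "(1 - d) * f x \<le> f (x + t) \<and> f (x + t) \<le> (1 + d) * f x"
    proof (cases "t \<le> real n")
      case True
      then have "(1 - e) * f x \<le> f (x + t) \<and> f (x + t) \<le> (1 + e) * f x"
        using N1[of x] x t by auto
      then show ?thesis
        by (rule multiplicative_bounds_mono[OF less_imp_le[OF fx], rotated]) (use e in linarith)
    next
      case False
      have "(1 - e) * f x \<le> f (x + real n) \<and> f (x + real n) \<le> (1 + e) * f x"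
        using N1[of x] x by auto
      moreover have "t - real n \<in> {0..1}"
        using False t by auto
      then have "(1 - e) * f (x + real n) \<le> f (x + t) \<and> f (x + t) \<le> (1 + e) * f (x + real n)"
        using N2[of "x + real n"] x by (auto dest!: bspec[of _ _ "t - real n"])
      ultimately show ?thesis
        by (rule multiplicative_bounds_trans[OF fx less_imp_le[OF e(1)] e(2,3)])
    qed
    then show "(1 - d) * f x \<le> f (x + t)" "f (x + t) \<le> (1 + d) * f x"
      by simp_all
  qed
qed

lemma long_tailed_density_bounds_back:
  assumes "long_tailed_density f xh" and "K \<ge> 0" and "\<epsilon> > 0"
  shows "\<forall>\<^sub>F x in at_top. f x > 0 \<and>
           (\<forall>y\<in>{0..K}. (1 - \<epsilon>) * f x \<le> f (x - y) \<and> f (x - y) \<le> (1 + \<epsilon>) * f x)"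
proof -
  define d where "d = \<epsilon> / (1 + \<epsilon>)"
  have d: "0 < d" "1 - d = 1 / (1 + \<epsilon>)" "(1 - \<epsilon>) * (1 + d) \<le> 1"
    using assms(3) by (auto simp: d_def field_simps)
  obtain N where N: "\<And>x. x \<ge> N \<Longrightarrow> f x > 0 \<and> (\<forall>t\<in>{0..real (nat \<lceil>K\<rceil>)}.
      (1 - d) * f x \<le> f (x + t) \<and> f (x + t) \<le> (1 + d) * f x)"
    using long_tailed_density_bounds_nat[OF assms(1) d(1)] by (auto simp: eventually_at_top_linorder)
  show ?thesis
    unfolding eventually_at_top_linorder
  proof (intro exI[of _ "N + K"] allI impI conjI ballI)
    fix x
    assume x: "x \<ge> N + K"
    then show fx: "f x > 0"
      using N[of x] assms(2) by auto
    fix y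
    assume y: "y \<in> {0..K}"
    have "y \<in> {0..real (nat \<lceil>K\<rceil>)}"
      using y by (simp; linarith)
    moreover have fy: "f (x - y) > 0" and "\<forall>t\<in>{0..real (nat \<lceil>K\<rceil>)}.
        (1 - d) * f (x - y) \<le> f (x - y + t) \<and> f (x - y + t) \<le> (1 + d) * f (x - y)"
      using N[of "x - y"] x y by auto
    ultimately have le: "(1 - d) * f (x - y) \<le> f x" "f x \<le> (1 + d) * f (x - y)"
      by (auto dest!: bspec[of _ _ y])
    show "f (x - y) \<le> (1 + \<epsilon>) * f x"
      using le(1) d(2) assms(3) by (simp add: field_simps)
    show "(1 - \<epsilon>) * f x \<le> f (x - y)"
    proof (cases "\<epsilon> \<le> 1")
      case True
      have "(1 - \<epsilon>) * f x \<le> ((1 - \<epsilon>) * (1 + d)) * f (x - y)"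
        using le(2) True by (simp add: mult.assoc mult_left_mono)
      also have "\<dots> \<le> f (x - y)"
        using d(3) fy by (simp add: mult_left_le_one_le)
      finally show ?thesis .
    next
      case False
      with \<open>f x > 0\<close> fy show ?thesis
        by (smt (verit) mult_nonpos_nonneg)
    qed
  qed
qed

lemma uniformly_insensitive_bounds:
  fixes f h :: "real \<Rightarrow> real"
  assumes "\<forall>\<^sub>F x in at_top. f x > 0"
    and "\<forall>\<epsilon>>0. \<forall>\<^sub>F x in at_top. \<forall>t. \<bar>t\<bar> \<le> h x \<longrightarrow> \<bar>f (x + t) / f x - 1\<bar> \<le> \<epsilon>" and "d > 0"
  shows "\<forall>\<^sub>F x in at_top. f x > 0 \<and>
           (\<forall>t. \<bar>t\<bar> \<le> h x \<longrightarrow> (1 - d) * f x \<le> f (x + t) \<and> f (x + t) \<le> (1 + d) * f x)"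
proof -
  have "\<forall>\<^sub>F x in at_top. \<forall>t. \<bar>t\<bar> \<le> h x \<longrightarrow> \<bar>f (x + t) / f x - 1\<bar> \<le> d"
    using assms(2,3) by blast
  with assms(1) show ?thesis
    by eventually_elim (meson bounds_of_ratio_near_one)
qed

lemma doubling_bound_reflect:
  fixes f :: "real \<Rightarrow> real"
  assumes "c > 0" and doubling: "\<And>z. z \<ge> N \<Longrightarrow> \<forall>y\<in>{z<..2 * z}. f y \<ge> c * f z"
    and "0 < y" "y \<le> x / 2" "2 * N \<le> x"
  shows "f (x - y) \<le> f x / c"
proof -
  have "x \<in> {x - y<..2 * (x - y)}" "x - y \<ge> N"
    using assms(3-5) by auto
  with doubling[of "x - y"] assms(1) show ?thesis
    by (auto simp: field_simps)
qed

lemma concave_on_sum_reflect_mono: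
  fixes g :: "real \<Rightarrow> real"
  assumes conc: "concave_on {x0..} g" and u: "x0 \<le> u" "u < y" "y \<le> x / 2"
  shows "g u + g (x - u) \<le> g y + g (x - y)"
proof -
  define t where "t = (y - u) / (x - 2 * u)"
  have t: "0 \<le> t" "t \<le> 1" "t * (x - 2 * u) = y - u"
    using u by (auto simp: t_def field_simps)
  have y: "(1 - t) *\<^sub>R u + t *\<^sub>R (x - u) = y" and x_y: "(1 - t) *\<^sub>R (x - u) + t *\<^sub>R u = x - y"
    using t(3) by (simp_all add: algebra_simps)
  have mem: "u \<in> {x0..}" "x - u \<in> {x0..}"
    using u by auto
  show ?thesis
    using concave_onD[OF conc t(1,2) mem] concave_onD[OF conc t(1,2) mem(2,1)]
    unfolding y x_y by (simp add: algebra_simps)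
qed

lemma product_le_of_concave_neg_ln:
  fixes f :: "real \<Rightarrow> real"
  assumes pos: "\<forall>x\<ge>x0. f x > 0" and conc: "concave_on {x0..} (\<lambda>x. - ln (f x))"
    and u: "x0 \<le> u" "u < y" "y \<le> x / 2"
  shows "f y * f (x - y) \<le> f u * f (x - u)"
proof -
  have p: "f y > 0" "f (x - y) > 0" "f u > 0" "f (x - u) > 0"
    using pos u by auto
  have "ln (f y * f (x - y)) \<le> ln (f u * f (x - u))"
    using concave_on_sum_reflect_mono[OF conc u] p by (simp add: ln_mult)
  then show ?thesis
    using p by simp
qed

subsection \<open>Convolution of a long-tailed distribution\<close>

locale long_tailed_distribution =
  fixes F :: "real measure" and f :: "real \<Rightarrow> real" and xh :: real
  assumes distribution: "distribution_on_nonneg F" and xh_nonneg: "0 \<le> xh"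
    and density: "has_density_on F f xh" and long_tailed: "long_tailed_density f xh"
begin

lemma prob_space: "prob_space F"
  and sets_F: "sets F = sets borel"
  and negative_null: "emeasure F {..<0} = 0"
  using distribution unfolding distribution_on_nonneg_def by auto

lemma f_nonneg: "y \<ge> xh \<Longrightarrow> 0 \<le> f y"
  using density unfolding has_density_on_def by auto

lemma emeasure_eq_density: "B \<in> sets borel \<Longrightarrow> B \<subseteq> {xh..} \<Longrightarrow>
    emeasure F B = (\<integral>\<^sup>+ y\<in>B. ennreal (f y) \<partial>lborel)"
  using density unfolding has_density_on_def by auto

definition f0 :: "real \<Rightarrow> real" where
  "f0 y = indicator {xh..} y *\<^sub>R f y"

lemma f0_measurable [measurable]: "f0 \<in> borel_measurable borel"
  using density unfolding has_density_on_def f0_def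
  by (subst (asm) borel_measurable_restrict_space_iff) auto

lemma f0_eq: "y \<ge> xh \<Longrightarrow> f0 y = f y"
  and f0_eq_0: "y < xh \<Longrightarrow> f0 y = 0"
  by (auto simp: f0_def)

lemma f0_nonneg: "0 \<le> f0 y"
  using f_nonneg by (auto simp: f0_def indicator_def)

lemma f0_bounded: obtains M where "M \<ge> 0" "\<And>y. f0 y \<le> M"
proof -
  obtain M where M: "\<And>x. x \<ge> xh \<Longrightarrow> \<bar>f x\<bar> \<le> M"
    using long_tailed unfolding long_tailed_density_def by auto
  have "f0 y \<le> max 0 M" for y
    using M[of y] by (cases "y \<ge> xh") (auto simp: f0_def)
  then show thesis
    using that[of "max 0 M"] by simp
qed

lemma nn_integral_f0: "(\<integral>\<^sup>+ y. ennreal (f0 y) \<partial>lborel) = emeasure F {xh..}"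
  by (subst emeasure_eq_density) (auto intro!: nn_integral_cong simp: f0_def indicator_def)

lemma integrable_f0: "integrable lborel f0"
proof (rule integrableI_nonneg)
  have "emeasure F {xh..} < \<infinity>"
    using finite_measure.emeasure_finite[OF prob_space.finite_measure[OF prob_space]]
    by (simp add: less_top)
  then show "(\<integral>\<^sup>+ y. ennreal (f0 y) \<partial>lborel) < \<infinity>"
    by (simp add: nn_integral_f0)
qed (auto simp: f0_nonneg)

lemma integrable_indicator_f0: "A \<in> sets borel \<Longrightarrow> integrable lborel (\<lambda>y. indicator A y * f0 y)"
  using integrable_mult_indicator[of A lborel f0] integrable_f0 by simp

definition p :: real where
  "p = measure F {0..xh}"

definition q :: real where
  "q = measure F {xh..}"

lemma integral_f0: "integral\<^sup>L lborel f0 = q"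
proof -
  have "ennreal (integral\<^sup>L lborel f0) = emeasure F {xh..}"
    using integrable_f0 f0_nonneg by (simp add: nn_integral_f0[symmetric] nn_integral_eq_integral)
  then show ?thesis
    unfolding q_def measure_def by (metis enn2real_ennreal integral_nonneg_AE AE_I2 f0_nonneg)
qed

lemma p_nonneg: "0 \<le> p" and q_nonneg: "0 \<le> q"
  by (simp_all add: p_def q_def)

lemma p_plus_q: "p + q = 1"
proof -
  interpret prob_space F
    by (rule prob_space)
  have sets: "A \<in> sets F" if "A \<in> sets borel" for A
    using that sets_F by simp
  have "emeasure F {xh} = (\<integral>\<^sup>+ y\<in>{xh}. ennreal (f y) \<partial>lborel)"
    by (rule emeasure_eq_density) auto
  also have "\<dots> = 0"
    using AE_lborel_singleton[of xh] by (auto intro!: nn_integral_zero' elim!: eventually_mono)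
  finally have "measure F {xh} = 0"
    by (simp add: measure_def)
  moreover have "measure F {..<0} = 0"
    using negative_null by (simp add: measure_def)
  have "{xh..} = {xh} \<union> {xh<..}"
    by auto
  then have "measure F {xh..} = measure F {xh<..}"
    using \<open>measure F {xh} = 0\<close> finite_measure_Union[of "{xh}" "{xh<..}"] by (simp add: sets)
  have "UNIV = {..<0} \<union> ({0..xh} \<union> {xh<..})"
    using xh_nonneg by auto
  then have "measure F ({..<0} \<union> ({0..xh} \<union> {xh<..})) = 1"
    using prob_space sets_eq_imp_space_eq[OF sets_F] by simp
  moreover have "measure F ({..<0} \<union> ({0..xh} \<union> {xh<..})) =
      measure F {..<0} + measure F ({0..xh} \<union> {xh<..})"
    using xh_nonneg by (intro finite_measure_Union sets) auto
  moreover have "measure F ({0..xh} \<union> {xh<..}) = measure F {0..xh} + measure F {xh<..}"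
    by (intro finite_measure_Union sets) auto
  ultimately show ?thesis
    using negative_null \<open>measure F {xh..} = measure F {xh<..}\<close>
    by (simp add: p_def q_def measure_def)
qed

lemma q_le_1: "q \<le> 1"
  using p_plus_q p_nonneg by linarith

definition head :: "real \<Rightarrow> real" where
  "head a = (\<integral>y. indicator {..a} y * f0 y \<partial>lborel)"

definition tail :: "real \<Rightarrow> real" where
  "tail a = (\<integral>y. indicator {a<..} y * f0 y \<partial>lborel)"

lemma head_plus_tail: "head a + tail a = q"
proof -
  have "head a + tail a = (\<integral>y. indicator {..a} y * f0 y + indicator {a<..} y * f0 y \<partial>lborel)"
    unfolding head_def tail_def by (simp add: integrable_indicator_f0)
  also have "\<dots> = q"
    unfolding integral_f0[symmetric] by (intro Bochner_Integration.integral_cong) (auto simp: indicator_def)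
  finally show ?thesis .
qed

lemma head_nonneg: "0 \<le> head a" and tail_nonneg: "0 \<le> tail a"
  unfolding head_def tail_def using f0_nonneg by (auto intro!: integral_nonneg_AE)

lemma tail_small: assumes "\<epsilon> > 0" obtains a where "a \<ge> xh" "tail a \<le> \<epsilon>"
proof -
  have "(head \<longlongrightarrow> q) at_top"
    unfolding head_def integral_f0[symmetric]
  proof (rule integral_dominated_convergence_at_top[where w = f0])
    show "AE y in lborel. ((\<lambda>a. indicator {..a} y * f0 y) \<longlongrightarrow> f0 y) at_top"
    proof (rule AE_I2)
      fix y :: real
      have "\<forall>\<^sub>F a in at_top. indicator {..a} y * f0 y = f0 y"
        using eventually_ge_at_top[of y] by eventually_elim auto
      then show "((\<lambda>a. indicator {..a} y * f0 y) \<longlongrightarrow> f0 y) at_top"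
        by (rule tendsto_eventually)
    qed
  qed (auto simp: integrable_f0 f0_nonneg indicator_def)
  from tendstoD[OF this assms] obtain N where N: "\<And>a. a \<ge> N \<Longrightarrow> dist (head a) q < \<epsilon>"
    by (auto simp: eventually_at_top_linorder)
  have "tail (max N xh) \<le> \<epsilon>"
    using N[of "max N xh"] head_plus_tail[of "max N xh"] by (simp add: dist_real_def)
  then show thesis
    using that[of "max N xh"] by simp
qed

definition low_conv :: "real \<Rightarrow> real" where
  "low_conv x = (\<integral>y\<in>{0..xh}. f (x - y) \<partial>F)"

lemma low_conv_ratio_tendsto: "((\<lambda>x. low_conv x / f x) \<longlongrightarrow> p) at_top"
proof (rule tendsto_real_by_le)
  fix \<epsilon> :: real
  assume "\<epsilon> > 0"
  interpret prob_space F
    by (rule prob_space)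
  have sets: "{0..xh} \<in> sets F"
    using sets_F by simp
  obtain M where M: "M \<ge> 0" "\<And>y. f0 y \<le> M"
    using f0_bounded by blast
  have integrable: "set_integrable F {0..xh} (\<lambda>y. f0 (x - y))" for x
    unfolding set_integrable_def
    by (rule integrableI_bounded_set_indicator[where B = M])
      (use M in \<open>auto simp: sets f0_nonneg abs_of_nonneg less_top[symmetric] measurable_cong_sets[OF sets_F refl]\<close>)
  have const: "set_integrable F {0..xh} (\<lambda>y. c)" "(\<integral>y\<in>{0..xh}. c \<partial>F) = p * c" for c :: real
    unfolding p_def set_integrable_def
    by (auto intro!: integrableI_bounded_set_indicator[where B = "\<bar>c\<bar>"] simp: sets less_top[symmetric] set_integral_const)
  show "\<forall>\<^sub>F x in at_top. \<bar>low_conv x / f x - p\<bar> \<le> \<epsilon>"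
    using long_tailed_density_bounds_back[OF long_tailed xh_nonneg \<open>\<epsilon> > 0\<close>] eventually_ge_at_top[of "2 * xh"]
  proof eventually_elim
    case (elim x)
    have low_conv: "low_conv x = (\<integral>y\<in>{0..xh}. f0 (x - y) \<partial>F)"
      unfolding low_conv_def using elim by (intro set_lebesgue_integral_cong sets) (auto simp: f0_eq)
    have "(\<integral>y\<in>{0..xh}. (1 - \<epsilon>) * f x \<partial>F) \<le> low_conv x"
      "low_conv x \<le> (\<integral>y\<in>{0..xh}. (1 + \<epsilon>) * f x \<partial>F)"
      unfolding low_conv using elim by (intro set_integral_mono integrable const(1); auto simp: f0_eq)+
    then have "p * ((1 - \<epsilon>) * f x) \<le> low_conv x" "low_conv x \<le> p * ((1 + \<epsilon>) * f x)"
      by (simp_all only: const(2))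
    then have "p - \<epsilon> * p \<le> low_conv x / f x" "low_conv x / f x \<le> p + \<epsilon> * p"
      using elim by (auto simp: field_simps)
    moreover have "\<epsilon> * p \<le> \<epsilon>"
      using p_plus_q q_nonneg \<open>\<epsilon> > 0\<close> by (simp add: mult_left_le)
    ultimately show ?case
      by (simp add: abs_le_iff)
  qed
qed

definition conv_kernel :: "real \<Rightarrow> real \<Rightarrow> real" where
  "conv_kernel x y = f0 (x - y) * f0 y"

lemma conv_kernel_measurable [measurable]: "conv_kernel x \<in> borel_measurable borel"
  unfolding conv_kernel_def by measurable

lemma integrable_conv_kernel:
  assumes "A \<in> sets borel"
  shows "integrable lborel (\<lambda>y. indicator A y * conv_kernel x y)"
proof -
  obtain M where M: "M \<ge> 0" "\<And>y. f0 y \<le> M"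
    using f0_bounded by blast
  show ?thesis
  proof (rule Bochner_Integration.integrable_bound)
    show "integrable lborel (\<lambda>y. M * f0 y)"
      using integrable_f0 by simp
    show "AE y in lborel. norm (indicator A y * conv_kernel x y) \<le> norm (M * f0 y)"
      using M f0_nonneg
      by (auto simp: conv_kernel_def indicator_def abs_mult intro!: mult_right_mono)
  qed (use assms in \<open>simp add: conv_kernel_def\<close>)
qed

definition half_conv :: "real \<Rightarrow> real" where
  "half_conv x = (\<integral>y. indicator {..x/2} y * conv_kernel x y \<partial>lborel)"

definition high_conv :: "real \<Rightarrow> real" where
  "high_conv x = (\<integral>y\<in>{xh..x - xh}. f (x - y) * f y \<partial>lborel)"

text \<open>The reflection y \<mapsto> x - y maps the range y > x/2 onto y < x/2, which differs from y \<le> x/2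
  by a null set.\<close>

lemma high_conv_eq: "high_conv x = 2 * half_conv x"
proof -
  have "high_conv x = (\<integral>y. conv_kernel x y \<partial>lborel)"
    unfolding high_conv_def set_lebesgue_integral_def
    by (intro Bochner_Integration.integral_cong) (auto simp: conv_kernel_def f0_def indicator_def)
  also have "\<dots> = (\<integral>y. indicator {..x/2} y * conv_kernel x y
                        + indicator {x/2<..} y * conv_kernel x y \<partial>lborel)"
    by (intro Bochner_Integration.integral_cong) (auto simp: indicator_def)
  also have "\<dots> = half_conv x + (\<integral>y. indicator {x/2<..} y * conv_kernel x y \<partial>lborel)"
    unfolding half_conv_def by (intro Bochner_Integration.integral_add integrable_conv_kernel) auto
  also have "(\<integral>y. indicator {x/2<..} y * conv_kernel x y \<partial>lborel)
      = (\<integral>y. indicator {x/2<..} (x + (-1) * y) * conv_kernel x (x + (-1) * y) \<partial>lborel)"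
    using lborel_integral_real_affine[of "-1" "\<lambda>y. indicator {x/2<..} y * conv_kernel x y" x] by simp
  also have "\<dots> = half_conv x"
    unfolding half_conv_def
  proof (rule integral_cong_AE)
    show "AE y in lborel. indicator {x/2<..} (x + (-1) * y) * conv_kernel x (x + (-1) * y)
        = indicator {..x/2} y * conv_kernel x y"
      using AE_lborel_singleton[of "x/2"]
      by eventually_elim (auto simp: indicator_def conv_kernel_def)
  qed auto
  finally show ?thesis
    by simp
qed

lemma conv_kernel_eq: "xh \<le> y \<Longrightarrow> y \<le> x / 2 \<Longrightarrow> conv_kernel x y = f (x - y) * f y"
  by (simp add: conv_kernel_def f0_eq)

lemma half_conv_le_integral:
  assumes "integrable lborel g" "\<And>y. 0 \<le> g y"
    and "\<And>y. xh \<le> y \<Longrightarrow> y \<le> x / 2 \<Longrightarrow> f (x - y) * f y \<le> g y"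
  shows "half_conv x \<le> integral\<^sup>L lborel g"
proof -
  have "indicator {..x/2} y * conv_kernel x y \<le> g y" for y
    using assms(2,3)[of y] conv_kernel_eq[of y x]
    by (cases "xh \<le> y") (auto simp: indicator_def conv_kernel_def f0_eq_0)
  then show ?thesis
    unfolding half_conv_def by (intro integral_mono integrable_conv_kernel assms(1)) auto
qed

lemma integral_le_half_conv:
  assumes "integrable lborel g" "\<And>y. y < xh \<or> x / 2 < y \<Longrightarrow> g y \<le> 0"
    and "\<And>y. xh \<le> y \<Longrightarrow> y \<le> x / 2 \<Longrightarrow> g y \<le> f (x - y) * f y"
  shows "integral\<^sup>L lborel g \<le> half_conv x"
proof -
  have "g y \<le> indicator {..x/2} y * conv_kernel x y" for y
    using assms(2,3)[of y] conv_kernel_eq[of y x] f0_nonneg[of y] f0_nonneg[of "x - y"]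
    by (cases "xh \<le> y") (auto simp: indicator_def conv_kernel_def f0_eq_0)
  then show ?thesis
    unfolding half_conv_def by (intro integral_mono integrable_conv_kernel assms(1)) auto
qed

lemma half_conv_lower_bound:
  assumes "e > 0" "a \<ge> xh"
  shows "\<forall>\<^sub>F x in at_top. f x > 0 \<and> (1 - e) * f x * head a \<le> half_conv x"
proof -
  have "a \<ge> 0"
    using assms(2) xh_nonneg by linarith
  from long_tailed_density_bounds_back[OF long_tailed this assms(1)] eventually_ge_at_top[of "2 * a"]
  show ?thesis
  proof eventually_elim
    case (elim x)
    have "(1 - e) * f x * head a = (\<integral>y. (1 - e) * f x * (indicator {..a} y * f0 y) \<partial>lborel)"
      unfolding head_def by simp
    also have "\<dots> \<le> half_conv x"
    proof (rule integral_le_half_conv)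
      show "integrable lborel (\<lambda>y. (1 - e) * f x * (indicator {..a} y * f0 y))"
        by (simp add: integrable_indicator_f0)
      show "(1 - e) * f x * (indicator {..a} y * f0 y) \<le> 0" if "y < xh \<or> x / 2 < y" for y
        using that elim by (auto simp: f0_eq_0)
      show "(1 - e) * f x * (indicator {..a} y * f0 y) \<le> f (x - y) * f y"
        if "xh \<le> y" "y \<le> x / 2" for y
        using that elim xh_nonneg f_nonneg[of y] f_nonneg[of "x - y"]
        by (auto simp: f0_eq indicator_def intro!: mult_right_mono)
    qed
    finally show ?case
      using elim by simp
  qed
qed

lemma half_conv_ratio_tendsto:
  assumes upper: "\<And>e. e > 0 \<Longrightarrow> \<forall>\<^sub>F x in at_top. half_conv x \<le> (q + e) * f x"
  shows "((\<lambda>x. half_conv x / f x) \<longlongrightarrow> q) at_top"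
proof (rule tendsto_real_by_le)
  fix \<epsilon> :: real
  assume "\<epsilon> > 0"
  then obtain a where a: "a \<ge> xh" "tail a \<le> \<epsilon> / 2"
    using tail_small[of "\<epsilon> / 2"] by auto
  have "(1 - \<epsilon> / 2) * head a \<ge> q - \<epsilon>"
  proof -
    have "\<epsilon> / 2 * head a \<le> \<epsilon> / 2"
      using \<open>\<epsilon> > 0\<close> head_nonneg head_plus_tail[of a] tail_nonneg[of a] q_le_1
      by (intro mult_left_le) auto
    then show ?thesis
      using head_plus_tail[of a] a(2) by (simp add: algebra_simps)
  qed
  have "\<epsilon> / 2 > 0"
    using \<open>\<epsilon> > 0\<close> by simp
  from half_conv_lower_bound[OF this a(1)] upper[OF \<open>\<epsilon> > 0\<close>]
  show "\<forall>\<^sub>F x in at_top. \<bar>half_conv x / f x - q\<bar> \<le> \<epsilon>"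
  proof eventually_elim
    case (elim x)
    then have "(1 - \<epsilon> / 2) * head a \<le> half_conv x / f x" "half_conv x / f x \<le> q + \<epsilon>"
      by (simp_all add: field_simps)
    with \<open>(1 - \<epsilon> / 2) * head a \<ge> q - \<epsilon>\<close> show ?case
      by (simp add: abs_le_iff)
  qed
qed

lemma half_conv_le_near_far:
  assumes "0 \<le> d" "0 \<le> f x"
    and near: "\<And>y. xh \<le> y \<Longrightarrow> y \<le> a \<Longrightarrow> y \<le> x / 2 \<Longrightarrow> f (x - y) \<le> (1 + d) * f x"
    and g: "integrable lborel g" "\<And>y. 0 \<le> g y"
    and far: "\<And>y. xh \<le> y \<Longrightarrow> a < y \<Longrightarrow> y \<le> x / 2 \<Longrightarrow> f (x - y) * f y \<le> g y"
  shows "half_conv x \<le> (1 + d) * f x * q + integral\<^sup>L lborel g"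
proof -
  have "half_conv x \<le> (\<integral>y. (1 + d) * f x * f0 y + g y \<partial>lborel)"
  proof (rule half_conv_le_integral)
    show "integrable lborel (\<lambda>y. (1 + d) * f x * f0 y + g y)"
      using integrable_f0 g(1) by simp
    show "0 \<le> (1 + d) * f x * f0 y + g y" for y
      using assms(1,2) f0_nonneg[of y] g(2)[of y] by simp
    fix y
    assume y: "xh \<le> y" "y \<le> x / 2"
    show "f (x - y) * f y \<le> (1 + d) * f x * f0 y + g y"
    proof (cases "y \<le> a")
      case True
      then have "f (x - y) * f y \<le> (1 + d) * f x * f y"
        using near y f_nonneg[of y] by (intro mult_right_mono) auto
      with y g(2)[of y] show ?thesis
        by (simp add: f0_eq)
    next
      case False
      with far y assms(1,2) f0_nonneg[of y] show ?thesis
        by (smt (verit) mult_nonneg_nonneg not_le)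
    qed
  qed
  also have "\<dots> = (1 + d) * f x * q + integral\<^sup>L lborel g"
    using integrable_f0 g(1) by (simp add: integral_f0)
  finally show ?thesis .
qed

lemma half_conv_upper_bound_doubling:
  assumes c: "c > 0" and doubling: "\<forall>\<^sub>F x in at_top. \<forall>y\<in>{x<..2 * x}. f y \<ge> c * f x"
    and e: "e > 0"
  shows "\<forall>\<^sub>F x in at_top. half_conv x \<le> (q + e) * f x"
proof -
  obtain a where a: "a \<ge> xh" "tail a \<le> c * e / 2"
    using tail_small[of "c * e / 2"] c e by auto
  have "a \<ge> 0" "e / 2 > 0"
    using a xh_nonneg e by auto
  obtain N where N: "\<And>x. x \<ge> N \<Longrightarrow> \<forall>y\<in>{x<..2 * x}. f y \<ge> c * f x"
    using doubling by (auto simp: eventually_at_top_linorder)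
  from long_tailed_density_bounds_back[OF long_tailed \<open>a \<ge> 0\<close> \<open>e / 2 > 0\<close>]
    eventually_ge_at_top[of "2 * max N a"]
  show ?thesis
  proof eventually_elim
    case (elim x)
    have "half_conv x \<le> (1 + e / 2) * f x * q + (\<integral>y. f x / c * (indicator {a<..} y * f0 y) \<partial>lborel)"
    proof (rule half_conv_le_near_far)
      show "f (x - y) \<le> (1 + e / 2) * f x" if "xh \<le> y" "y \<le> a" for y
        using that elim xh_nonneg by auto
      show "0 \<le> f x / c * (indicator {a<..} y * f0 y)" for y
        using elim c f0_nonneg[of y] by simp
      fix y
      assume y: "xh \<le> y" "a < y" "y \<le> x / 2"
      then have "f (x - y) \<le> f x / c"
        using elim \<open>a \<ge> 0\<close> by (intro doubling_bound_reflect[OF c N]) auto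
      then have "f (x - y) * f y \<le> f x / c * f y"
        using y f_nonneg[of y] by (intro mult_right_mono) auto
      with y show "f (x - y) * f y \<le> f x / c * (indicator {a<..} y * f0 y)"
        by (simp add: f0_eq)
    qed (use elim e in \<open>auto simp: integrable_indicator_f0\<close>)
    also have "\<dots> = f x * ((1 + e / 2) * q + tail a / c)"
      unfolding tail_def by (simp add: algebra_simps)
    also have "\<dots> \<le> f x * (q + e)"
    proof -
      have "e / 2 * q \<le> e / 2" "tail a / c \<le> e / 2"
        using e q_le_1 a(2) c by (simp_all add: mult_left_le field_simps)
      then have "(1 + e / 2) * q + tail a / c \<le> q + e"
        by (simp add: algebra_simps)
      with elim show ?thesis
        by (intro mult_left_mono) auto
    qed
    finally show ?case
      by (simp add: mult.commute)
  qed
qed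

lemma half_conv_upper_bound_log_convex:
  fixes h :: "real \<Rightarrow> real"
  assumes pos: "\<forall>x\<ge>x0. f x > 0" and conc: "concave_on {x0..} (\<lambda>x. - ln (f x))"
    and h: "filterlim h at_top at_top"
    and insensitive: "\<forall>\<epsilon>>0. \<forall>\<^sub>F x in at_top. \<forall>t. \<bar>t\<bar> \<le> h x \<longrightarrow> \<bar>f (x + t) / f x - 1\<bar> \<le> \<epsilon>"
    and small: "((\<lambda>x. x * f (h x)) \<longlongrightarrow> 0) at_top"
    and e: "e > 0"
  shows "\<forall>\<^sub>F x in at_top. half_conv x \<le> (q + e) * f x"
proof -
  define d where "d = min 1 (e / 3)"
  have d: "0 < d" "d \<le> 1" "3 * d \<le> e"
    using e by (auto simp: d_def)
  have "\<forall>\<^sub>F x in at_top. f x > 0"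
    using long_tailed unfolding long_tailed_density_def by auto
  from uniformly_insensitive_bounds[OF this insensitive d(1)]
    filterlim_at_top[THEN iffD1, OF h, rule_format, of "max x0 xh"]
    tendstoD[OF small d(1)] eventually_ge_at_top[of 0]
  show ?thesis
  proof eventually_elim
    case (elim x)
    have fhx: "f (h x) > 0"
      using pos elim by auto
    have "half_conv x \<le> (1 + d) * f x * q +
        (\<integral>y. (1 + d) * f x * f (h x) * indicator {0..x} y \<partial>lborel)"
    proof (rule half_conv_le_near_far)
      show "f (x - y) \<le> (1 + d) * f x" if "xh \<le> y" "y \<le> h x" for y
        using that elim xh_nonneg by (auto dest!: spec[of _ "- y"])
      show "0 \<le> (1 + d) * f x * f (h x) * indicator {0..x} y" for y
        using elim d fhx by simp
      fix y
      assume y: "xh \<le> y" "h x < y" "y \<le> x / 2"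
      then have "f y * f (x - y) \<le> f (h x) * f (x - h x)"
        using elim by (intro product_le_of_concave_neg_ln[OF pos conc]) auto
      also have "\<dots> \<le> f (h x) * ((1 + d) * f x)"
        using elim y xh_nonneg fhx by (intro mult_left_mono) (auto dest!: spec[of _ "- h x"])
      finally show "f (x - y) * f y \<le> (1 + d) * f x * f (h x) * indicator {0..x} y"
        using y xh_nonneg by (simp add: mult_ac)
    qed (use elim d in \<open>auto simp: integrable_indicator_iff emeasure_lborel_Icc_eq\<close>)
    also have "\<dots> = f x * ((1 + d) * (q + x * f (h x)))"
      using elim by (simp add: algebra_simps)
    also have "\<dots> \<le> f x * (q + e)"
    proof -
      have "x * f (h x) \<le> d"
        using elim by (simp add: dist_real_def)
      then have "d * (q + x * f (h x)) \<le> d * 2"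
        using d q_le_1 by (intro mult_left_mono) auto
      moreover have "(1 + d) * (q + x * f (h x)) = q + x * f (h x) + d * (q + x * f (h x))"
        by (simp add: algebra_simps)
      ultimately have "(1 + d) * (q + x * f (h x)) \<le> q + e"
        using d \<open>x * f (h x) \<le> d\<close> by linarith
      with elim show ?thesis
        by (intro mult_left_mono) auto
    qed
    finally show ?case
      by (simp add: mult.commute)
  qed
qed

lemma S_ac_if_half_conv_ratio_tendsto:
  assumes "((\<lambda>x. half_conv x / f x) \<longlongrightarrow> q) at_top"
  shows "S_ac F f xh"
proof -
  have "(2 * low_conv x + high_conv x) / (2 * f x) = low_conv x / f x + half_conv x / f x" for x
    by (simp add: high_conv_eq add_divide_distrib)
  then have "((\<lambda>x. (2 * low_conv x + high_conv x) / (2 * f x)) \<longlongrightarrow> 1) at_top"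
    using tendsto_add[OF low_conv_ratio_tendsto assms] p_plus_q by simp
  then have "(\<lambda>x. 2 * low_conv x + high_conv x) \<sim>[at_top] (\<lambda>x. 2 * f x)"
    by (rule asymp_equivI')
  then show ?thesis
    unfolding S_ac_def low_conv_def high_conv_def using long_tailed by simp
qed

end

theorem proposition11:
  fixes F :: "real measure" and f :: "real \<Rightarrow> real" and xh :: real
  assumes "distribution_on_nonneg F"
    and "0 \<le> xh"
    and "has_density_on F f xh"
    and "long_tailed_density f xh"
    and "(\<exists>c>0. \<forall>\<^sub>F x in at_top. \<forall>y\<in>{x<..2 * x}. f y \<ge> c * f x)
         \<or> (\<exists>x0 h :: real \<Rightarrow> real.
               (\<forall>x\<ge>x0. f x > 0) \<and>
               concave_on {x0..} (\<lambda>x. - ln (f x)) \<and>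
               filterlim h at_top at_top \<and>
               (\<forall>\<epsilon>>0. \<forall>\<^sub>F x in at_top. \<forall>t. \<bar>t\<bar> \<le> h x \<longrightarrow> \<bar>f (x + t) / f x - 1\<bar> \<le> \<epsilon>) \<and>
               ((\<lambda>x. x * exp (- (- ln (f (h x))))) \<longlongrightarrow> 0) at_top)"
  shows "S_ac F f xh"
proof -
  interpret long_tailed_distribution F f xh
    using assms(1-4) by unfold_locales
  show ?thesis
    using assms(5)
  proof (elim disjE exE conjE)
    fix c :: real
    assume "c > 0" and "\<forall>\<^sub>F x in at_top. \<forall>y\<in>{x<..2 * x}. f y \<ge> c * f x"
    then show ?thesis
      by (intro S_ac_if_half_conv_ratio_tendsto half_conv_ratio_tendsto
          half_conv_upper_bound_doubling)
  next
    fix x0 and h :: "real \<Rightarrow> real"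
    assume pos: "\<forall>x\<ge>x0. f x > 0" and h: "filterlim h at_top at_top"
      and small: "((\<lambda>x. x * exp (- (- ln (f (h x))))) \<longlongrightarrow> 0) at_top"
      and "concave_on {x0..} (\<lambda>x. - ln (f x))"
      and "\<forall>\<epsilon>>0. \<forall>\<^sub>F x in at_top. \<forall>t. \<bar>t\<bar> \<le> h x \<longrightarrow> \<bar>f (x + t) / f x - 1\<bar> \<le> \<epsilon>"
    moreover have "\<forall>\<^sub>F x in at_top. x * exp (- (- ln (f (h x)))) = x * f (h x)"
      using filterlim_at_top[THEN iffD1, OF h, rule_format, of x0] pos by (auto elim!: eventually_mono)
    then have "((\<lambda>x. x * f (h x)) \<longlongrightarrow> 0) at_top"
      by (rule Lim_transform_eventually[OF small])
    ultimately show ?thesis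
      by (intro S_ac_if_half_conv_ratio_tendsto half_conv_ratio_tendsto
          half_conv_upper_bound_log_convex)
  qed
qed

end
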